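(* Let $q \geq 3$ and $n$ be integers, and let $1 \leq d \leq n/3$. Let $\mathcal{A} \subseteq [q]^n$ be such that for all $x^{(1)}=(x^{(1)}_1, \ldots, x^{(1)}_n)$, $x^{(2)}=(x^{(2)}_1, \ldots, x^{(2)}_n) \in \mathcal{A}$, $|\{i \in [n] \mid x^{(1)}_i = x^{(2)}_i\}| \geq d$. Then $|\mathcal{A}| < q^{\,n-\frac{d}{10}}$.
   Context: $[q]=\{1,\dots,q\}$. *)

theory Defs
  imports "HOL-Analysis.Analysis"
begin

definition words :: "nat \<Rightarrow> nat \<Rightarrow> (nat \<Rightarrow> nat) set" where
  "words q n = PiE {0..<n} (\<lambda>_. {1..q})"

definition agree :: "nat \<Rightarrow> (nat \<Rightarrow> nat) \<Rightarrow> (nat \<Rightarrow> nat) \<Rightarrow> nat" where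
  "agree n x y = card {i \<in> {0..<n}. x i = y i}"

end

theory Submission
  imports Defs
begin

text \<open>Replacing the letter in one coordinate by 1, whenever the resulting word is not already
  in \<open>A\<close>, keeps the size of \<open>A\<close> and its agreement condition. In a family that is stable under
  all these compressions, any two words have at least \<open>d\<close> coordinates where both are 1. For such
  families \<open>|A| (q - 1)^d \<le> q^n\<close> follows by induction on \<open>n\<close>: after a second compression, which
  swaps a 1 into the last coordinate, the words ending in 1 have \<open>d - 1\<close> common 1s among the first
  \<open>n\<close> coordinates, while each of the other \<open>q - 1\<close> slices has \<open>d + 1\<close>. Finally \<open>q < (q - 1)^2\<close>
  for \<open>q \<ge> 3\<close> gives \<open>q^(d/10) < (q - 1)^d\<close>.\<close>

definition compress :: "('a \<Rightarrow> bool) \<Rightarrow> ('a \<Rightarrow> 'a) \<Rightarrow> 'a set \<Rightarrow> 'a \<Rightarrow> 'a" where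
  "compress C t A x = (if C x \<and> t x \<notin> A then t x else x)"

lemma inj_on_compress:
  assumes "inj_on t {x. C x}"
  shows "inj_on (compress C t A) A"
  using assms unfolding inj_on_def compress_def by (auto split: if_splits)

lemma compress_image_subset:
  assumes "A \<subseteq> W" "\<And>x. x \<in> W \<Longrightarrow> C x \<Longrightarrow> t x \<in> W"
  shows "compress C t A ` A \<subseteq> W"
  using assms by (auto simp: compress_def)

lemma sum_less_sum_compress_image:
  fixes h :: "'a \<Rightarrow> nat"
  assumes "inj_on t {x. C x}" "finite A"
    and "\<And>x. C x \<Longrightarrow> h x < h (t x)"
    and "\<exists>x\<in>A. C x \<and> t x \<notin> A"
  shows "(\<Sum>x\<in>A. h x) < (\<Sum>x\<in>compress C t A ` A. h x)"
proof -
  have "(\<Sum>x\<in>A. h x) < (\<Sum>x\<in>A. h (compress C t A x))"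
    using sum_strict_mono_ex1[OF assms(2), of h "\<lambda>x. h (compress C t A x)"] assms(3,4)
    by (auto simp: compress_def less_imp_le)
  also have "\<dots> = (\<Sum>x\<in>compress C t A ` A. h x)"
    using inj_on_compress[OF assms(1)] by (simp add: sum.reindex)
  finally show ?thesis .
qed

text \<open>The hypothesis \<open>blocked\<close> is for an eligible \<open>y\<close> that stays because \<open>t y\<close> is already in
  \<open>A\<close>, so that \<open>R x (t y)\<close> is known.\<close>

lemma compress_pairwise:
  assumes R: "\<forall>x\<in>A. \<forall>y\<in>A. R x y"
    and sym: "\<And>x y. R x y \<Longrightarrow> R y x"
    and both: "\<And>x y. C x \<Longrightarrow> C y \<Longrightarrow> R x y \<Longrightarrow> R (t x) (t y)"
    and blocked: "\<And>x y. C x \<Longrightarrow> C y \<Longrightarrow> R x (t y) \<Longrightarrow> R (t x) y"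
    and one: "\<And>x y. C x \<Longrightarrow> \<not> C y \<Longrightarrow> R x y \<Longrightarrow> R (t x) y"
  shows "\<forall>x\<in>compress C t A ` A. \<forall>y\<in>compress C t A ` A. R x y"
proof -
  have fixed: "R (compress C t A x) y" if "x \<in> A" "y \<in> A" "compress C t A y = y" for x y
  proof (cases "C x \<and> t x \<notin> A")
    case True
    show ?thesis
    proof (cases "C y")
      case True
      then have "t y \<in> A" using that(2,3) by (auto simp: compress_def split: if_splits)
      then show ?thesis using blocked \<open>C x \<and> t x \<notin> A\<close> True R that(1) by (simp add: compress_def)
    next
      case False
      then show ?thesis using one \<open>C x \<and> t x \<notin> A\<close> R that by (simp add: compress_def)
    qed
  qed (use that R in \<open>simp add: compress_def\<close>)
  show ?thesis
  proof (intro ballI)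
    fix u v assume "u \<in> compress C t A ` A" "v \<in> compress C t A ` A"
    then obtain x y where xy: "x \<in> A" "y \<in> A" "u = compress C t A x" "v = compress C t A y"
      by blast
    show "R u v"
    proof (cases "compress C t A x = x \<or> compress C t A y = y")
      case True
      then show ?thesis using fixed[of x y] fixed[of y x] sym xy by auto
    next
      case False
      then have "C x \<and> t x \<notin> A" "C y \<and> t y \<notin> A" by (metis compress_def)+
      then show ?thesis using both R xy by (simp add: compress_def)
    qed
  qed
qed

text \<open>A family of maximal potential \<open>\<Sum>x\<in>B. h x\<close> among those of the same size with property
  \<open>P\<close> is stable under every compression that preserves \<open>P\<close> and increases \<open>h\<close>.\<close>

lemma obtain_compression_stable:
  fixes h :: "'a \<Rightarrow> nat"
  assumes "finite W" "A \<subseteq> W" "P A"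
    and inj: "\<And>k. k \<in> I \<Longrightarrow> inj_on (t k) {x. C k x}"
    and closed: "\<And>k x. k \<in> I \<Longrightarrow> x \<in> W \<Longrightarrow> C k x \<Longrightarrow> t k x \<in> W"
    and increasing: "\<And>k x. k \<in> I \<Longrightarrow> C k x \<Longrightarrow> h x < h (t k x)"
    and preserved: "\<And>k B. k \<in> I \<Longrightarrow> P B \<Longrightarrow> P (compress (C k) (t k) B ` B)"
  obtains B where "B \<subseteq> W" "card B = card A" "P B"
    "\<And>k x. k \<in> I \<Longrightarrow> x \<in> B \<Longrightarrow> C k x \<Longrightarrow> t k x \<in> B"
proof -
  define K where "K = {B. B \<subseteq> W \<and> card B = card A \<and> P B}"
  define pot where "pot B = (\<Sum>x\<in>B. h x)" for B
  have "finite K" unfolding K_def using \<open>finite W\<close> by (auto intro: finite_subset[of _ "Pow W"])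
  moreover have "A \<in> K" using assms by (simp add: K_def)
  ultimately have "Max (pot ` K) \<in> pot ` K" by (intro Max_in) auto
  then obtain B where "B \<in> K" and B_max: "pot B = Max (pot ` K)" by auto
  then have B: "B \<subseteq> W" "card B = card A" "P B" by (auto simp: K_def)
  have "t k x \<in> B" if "k \<in> I" "x \<in> B" "C k x" for k x
  proof (rule ccontr)
    assume "t k x \<notin> B"
    let ?B' = "compress (C k) (t k) B ` B"
    have "?B' \<in> K"
      using B compress_image_subset[of B W "C k" "t k"] closed preserved \<open>k \<in> I\<close>
        card_image[OF inj_on_compress[OF inj]]
      by (auto simp: K_def)
    moreover have "pot B < pot ?B'" unfolding pot_def
    proof (rule sum_less_sum_compress_image)
      show "inj_on (t k) {x. C k x}" by (rule inj[OF \<open>k \<in> I\<close>])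
      show "finite B" using B(1) \<open>finite W\<close> by (rule finite_subset)
      show "h z < h (t k z)" if "C k z" for z by (rule increasing[OF \<open>k \<in> I\<close> that])
      show "\<exists>x\<in>B. C k x \<and> t k x \<notin> B" using that \<open>t k x \<notin> B\<close> by blast
    qed
    moreover have "pot ?B' \<le> pot B" using \<open>?B' \<in> K\<close> \<open>finite K\<close> B_max by simp
    ultimately show False by simp
  qed
  with B that show ?thesis by blast
qed

lemma card_filter_remove:
  assumes "finite I" "j \<in> I"
  shows "card {i\<in>I. P i} = card {i\<in>I - {j}. P i} + (if P j then 1 else 0)"
proof -
  have "{i\<in>I. P i} = (if P j then insert j {i\<in>I - {j}. P i} else {i\<in>I - {j}. P i})"
    using assms(2) by auto
  then show ?thesis using assms(1) by simp
qed

lemma card_filter_cong: "(\<And>i. i \<in> I \<Longrightarrow> P i = Q i) \<Longrightarrow> card {i\<in>I. P i} = card {i\<in>I. Q i}"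
  by (metis (mono_tags, lifting) Collect_cong)

lemma finite_words: "finite (words q n)"
  by (simp add: words_def finite_PiE)

lemma card_words: "card (words q n) = q ^ n"
  by (simp add: words_def card_PiE)

lemma words_letter: "x \<in> words q n \<Longrightarrow> i < n \<Longrightarrow> x i \<in> {1..q}"
  by (auto simp: words_def PiE_def Pi_def)

lemma words_undefined: "x \<in> words q n \<Longrightarrow> n \<le> i \<Longrightarrow> x i = undefined"
  by (auto simp: words_def PiE_def extensional_def)

lemma fun_upd_in_words: "x \<in> words q n \<Longrightarrow> i < n \<Longrightarrow> v \<in> {1..q} \<Longrightarrow> x(i := v) \<in> words q n"
  by (auto simp: words_def PiE_def Pi_def extensional_def)

lemma restrict_in_words: "x \<in> words q (Suc n) \<Longrightarrow> restrict x {0..<n} \<in> words q n"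
  by (auto simp: words_def PiE_def Pi_def extensional_def)

lemma card_restrict_slice:
  assumes "B \<subseteq> words q (Suc n)"
  shows "card ((\<lambda>x. restrict x {0..<n}) ` {x\<in>B. x n = a}) = card {x\<in>B. x n = a}"
proof (rule card_image, rule inj_onI)
  fix x y assume "x \<in> {x\<in>B. x n = a}" "y \<in> {x\<in>B. x n = a}"
    and eq: "restrict x {0..<n} = restrict y {0..<n}"
  then have words: "x \<in> words q (Suc n)" "y \<in> words q (Suc n)" and "x n = y n" using assms by auto
  show "x = y"
  proof
    fix i
    show "x i = y i"
      using fun_cong[OF eq, of i] \<open>x n = y n\<close>
        words_undefined[OF words(1), of i] words_undefined[OF words(2), of i]
      by (cases "i < n"; cases "i = n") auto
  qed
qed

lemma card_eq_sum_card_slices: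
  assumes "B \<subseteq> words q (Suc n)"
  shows "card B = (\<Sum>a\<in>{1..q}. card {x\<in>B. x n = a})"
proof -
  have "B = (\<Union>a\<in>{1..q}. {x\<in>B. x n = a})" using assms words_letter[of _ q "Suc n" n] by auto
  then have "card B = card (\<Union>a\<in>{1..q}. {x\<in>B. x n = a})" by (rule arg_cong)
  also have "\<dots> = (\<Sum>a\<in>{1..q}. card {x\<in>B. x n = a})"
    using finite_subset[OF assms finite_words] by (intro card_UN_disjoint) auto
  finally show ?thesis .
qed

lemma agree_sym: "agree n x y = agree n y x"
  unfolding agree_def by (rule card_filter_cong) auto

lemma agree_fun_upd:
  assumes "i < n"
  shows "agree n (x(i := u)) y + (if x i = y i then 1 else 0) = agree n x y + (if u = y i then 1 else 0)"
proof -
  have "card {k\<in>{0..<n} - {i}. (x(i := u)) k = y k} = card {k\<in>{0..<n} - {i}. x k = y k}"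
    by (rule card_filter_cong) simp
  then show ?thesis
    using card_filter_remove[of "{0..<n}" i "\<lambda>k. (x(i := u)) k = y k"]
      card_filter_remove[of "{0..<n}" i "\<lambda>k. x k = y k"] assms
    by (simp add: agree_def)
qed

lemma inj_on_fun_upd_const: "inj_on (\<lambda>x. x(i := v)) {x. x i = a}"
  by (auto simp: inj_on_def) (metis fun_upd_triv fun_upd_upd)

lemma agree_compress_to_one:
  assumes "i < n" "\<forall>x\<in>A. \<forall>y\<in>A. d \<le> agree n x y"
  shows "\<forall>x\<in>compress (\<lambda>x. x i = a) (\<lambda>x. x(i := 1)) A ` A.
    \<forall>y\<in>compress (\<lambda>x. x i = a) (\<lambda>x. x(i := 1)) A ` A. d \<le> agree n x y"
proof (rule compress_pairwise[OF assms(2)])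
  note upd_left = agree_fun_upd[OF assms(1)]
  have upd_right: "agree n x (y(i := v)) + (if x i = y i then 1 else 0) = agree n x y + (if x i = v then 1 else 0)"
    for x y :: "nat \<Rightarrow> nat" and v
    using upd_left[of y v x] by (simp add: agree_sym eq_commute)
  show "d \<le> agree n y x" if "d \<le> agree n x y" for x y using that agree_sym by simp
  show "d \<le> agree n (x(i := 1)) (y(i := 1))" if "x i = a" "y i = a" "d \<le> agree n x y" for x y
    using that upd_left[of x 1 "y(i := 1)"] upd_right[of x y 1] by simp
  show "d \<le> agree n (x(i := 1)) y" if "x i = a" "y i = a" "d \<le> agree n x (y(i := 1))" for x y
    using that upd_left[of x 1 y] upd_right[of x y 1] by (simp split: if_splits)
  show "d \<le> agree n (x(i := 1)) y" if "x i = a" "y i \<noteq> a" "d \<le> agree n x y" for x y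
    using that upd_left[of x 1 y] by (simp split: if_splits)
qed

definition common_ones :: "nat \<Rightarrow> (nat \<Rightarrow> nat) \<Rightarrow> (nat \<Rightarrow> nat) \<Rightarrow> nat" where
  "common_ones n x y = card {i\<in>{0..<n}. x i = 1 \<and> y i = 1}"

lemma common_ones_sym: "common_ones n x y = common_ones n y x"
  unfolding common_ones_def by (rule card_filter_cong) auto

lemma common_ones_Suc:
  "common_ones (Suc n) x y = common_ones n x y + (if x n = 1 \<and> y n = 1 then 1 else 0)"
  using card_filter_remove[of "{0..<Suc n}" n "\<lambda>i. x i = 1 \<and> y i = 1"]
  by (simp add: common_ones_def atLeast0_lessThan_Suc)

lemma common_ones_restrict: "common_ones n (restrict x {0..<n}) (restrict y {0..<n}) = common_ones n x y"
  unfolding common_ones_def by (rule card_filter_cong) auto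

lemma common_ones_remove:
  "j < n \<Longrightarrow> common_ones (Suc n) x y = card {i\<in>{0..<n} - {j}. x i = 1 \<and> y i = 1}
     + (if x j = 1 \<and> y j = 1 then 1 else 0) + (if x n = 1 \<and> y n = 1 then 1 else 0)"
  using common_ones_Suc[of n x y] card_filter_remove[of "{0..<n}" j "\<lambda>i. x i = 1 \<and> y i = 1"]
  by (simp add: common_ones_def)

definition swap_letters :: "nat \<Rightarrow> nat \<Rightarrow> (nat \<Rightarrow> nat) \<Rightarrow> nat \<Rightarrow> nat" where
  "swap_letters i j x = x(i := x j, j := x i)"

lemma swap_letters_swap_letters: "swap_letters i j (swap_letters i j x) = x"
  by (auto simp: swap_letters_def)

lemma inj_swap_letters: "inj (swap_letters i j)"
  by (metis injI swap_letters_swap_letters)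

lemma swap_letters_in_words: "x \<in> words q n \<Longrightarrow> i < n \<Longrightarrow> j < n \<Longrightarrow> swap_letters i j x \<in> words q n"
  unfolding swap_letters_def by (intro fun_upd_in_words words_letter) auto

lemma common_ones_swap_letters_both:
  assumes "j < n"
  shows "common_ones (Suc n) (swap_letters j n x) (swap_letters j n y) = common_ones (Suc n) x y"
proof -
  have "card {i\<in>{0..<n} - {j}. swap_letters j n x i = 1 \<and> swap_letters j n y i = 1}
      = card {i\<in>{0..<n} - {j}. x i = 1 \<and> y i = 1}"
    by (rule card_filter_cong) (auto simp: swap_letters_def)
  then show ?thesis unfolding common_ones_remove[OF assms] using assms by (simp add: swap_letters_def)
qed

lemma common_ones_swap_letters_left:
  assumes "j < n" "x j = 1" "x n \<noteq> 1"
  shows "common_ones (Suc n) (swap_letters j n x) y + (if y j = 1 then 1 else 0)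
    = common_ones (Suc n) x y + (if y n = 1 then 1 else 0)"
proof -
  have "card {i\<in>{0..<n} - {j}. swap_letters j n x i = 1 \<and> y i = 1}
      = card {i\<in>{0..<n} - {j}. x i = 1 \<and> y i = 1}"
    by (rule card_filter_cong) (auto simp: swap_letters_def)
  then show ?thesis unfolding common_ones_remove[OF assms(1)] using assms by (simp add: swap_letters_def)
qed

lemma common_ones_compress_swap:
  assumes "j < n" "\<forall>x\<in>A. \<forall>y\<in>A. d \<le> common_ones (Suc n) x y"
  shows "\<forall>x\<in>compress (\<lambda>x. x j = 1 \<and> x n \<noteq> 1) (swap_letters j n) A ` A.
    \<forall>y\<in>compress (\<lambda>x. x j = 1 \<and> x n \<noteq> 1) (swap_letters j n) A ` A. d \<le> common_ones (Suc n) x y"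
proof (rule compress_pairwise[OF assms(2)])
  note both = common_ones_swap_letters_both[OF assms(1)]
  show "d \<le> common_ones (Suc n) y x" if "d \<le> common_ones (Suc n) x y" for x y
    using that common_ones_sym by simp
  show "d \<le> common_ones (Suc n) (swap_letters j n x) (swap_letters j n y)"
    if "d \<le> common_ones (Suc n) x y" for x y
    using that both by simp
  show "d \<le> common_ones (Suc n) (swap_letters j n x) y"
    if "d \<le> common_ones (Suc n) x (swap_letters j n y)" for x y
    using that both[of "swap_letters j n x" y] by (simp add: swap_letters_swap_letters)
  show "d \<le> common_ones (Suc n) (swap_letters j n x) y"
    if "x j = 1 \<and> x n \<noteq> 1" "\<not> (y j = 1 \<and> y n \<noteq> 1)" "d \<le> common_ones (Suc n) x y" for x y
    using that common_ones_swap_letters_left[OF assms(1), of x y] by (simp split: if_splits)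
qed

lemma card_ones_fun_upd:
  fixes x :: "nat \<Rightarrow> nat"
  assumes "i < n" "x i \<noteq> 1"
  shows "card {k\<in>{0..<n}. (x(i := 1)) k = 1} = Suc (card {k\<in>{0..<n}. x k = 1})"
proof -
  have "{k\<in>{0..<n}. (x(i := 1)) k = 1} = insert i {k\<in>{0..<n}. x k = 1}" using assms by auto
  then show ?thesis using assms by simp
qed

text \<open>The compression \<open>x \<mapsto> x(i := 1)\<close> is injective only on words with a fixed letter \<open>a\<close> at \<open>i\<close>,
  so it is indexed by the pair \<open>(i, a)\<close>.\<close>

lemma obtain_one_stable:
  assumes "1 \<le> q" "A \<subseteq> words q n" "\<forall>x\<in>A. \<forall>y\<in>A. d \<le> agree n x y"
  obtains B where "B \<subseteq> words q n" "card B = card A" "\<forall>x\<in>B. \<forall>y\<in>B. d \<le> agree n x y"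
    "\<And>x i. x \<in> B \<Longrightarrow> i < n \<Longrightarrow> x i \<noteq> 1 \<Longrightarrow> x(i := 1) \<in> B"
proof -
  let ?I = "{0..<n} \<times> - {1}"
  have inj: "inj_on (\<lambda>x. x(fst k := 1)) {x. x (fst k) = snd k}" for k :: "nat \<times> nat"
    by (rule inj_on_fun_upd_const)
  have closed: "x(fst k := 1) \<in> words q n" if "k \<in> ?I" "x \<in> words q n" for k x
    using that assms(1) by (auto intro: fun_upd_in_words)
  have increasing: "card {i\<in>{0..<n}. x i = 1} < card {i\<in>{0..<n}. (x(fst k := 1)) i = 1}"
    if "k \<in> ?I" "x (fst k) = snd k" for k and x :: "nat \<Rightarrow> nat"
    using that by (subst card_ones_fun_upd) auto
  have preserved: "\<forall>x\<in>compress (\<lambda>x. x (fst k) = snd k) (\<lambda>x. x(fst k := 1)) B ` B.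
      \<forall>y\<in>compress (\<lambda>x. x (fst k) = snd k) (\<lambda>x. x(fst k := 1)) B ` B. d \<le> agree n x y"
    if "k \<in> ?I" "\<forall>x\<in>B. \<forall>y\<in>B. d \<le> agree n x y" for k B
    using that by (intro agree_compress_to_one) auto
  obtain B where B: "B \<subseteq> words q n" "card B = card A" "\<forall>x\<in>B. \<forall>y\<in>B. d \<le> agree n x y"
    and stable: "\<And>k x. k \<in> ?I \<Longrightarrow> x \<in> B \<Longrightarrow> x (fst k) = snd k \<Longrightarrow> x(fst k := 1) \<in> B"
    using obtain_compression_stable[of "words q n" A "\<lambda>B. \<forall>x\<in>B. \<forall>y\<in>B. d \<le> agree n x y"
        ?I "\<lambda>k x. x(fst k := 1)" "\<lambda>k x. x (fst k) = snd k" "\<lambda>x. card {i\<in>{0..<n}. x i = 1}",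
        OF finite_words assms(2,3) inj closed increasing preserved]
    by blast
  show ?thesis
  proof (rule that[OF B])
    show "x(i := 1) \<in> B" if "x \<in> B" "i < n" "x i \<noteq> 1" for x i
      using stable[of "(i, x i)" x] that by simp
  qed
qed

text \<open>Setting \<open>y\<close> to 1 wherever it agrees with \<open>x\<close> stays inside a stable family and turns
  the agreements of \<open>x\<close> and \<open>y\<close> into common 1s.\<close>

lemma fill_ones_in_stable:
  fixes A :: "(nat \<Rightarrow> nat) set"
  assumes stable: "\<And>x i. x \<in> A \<Longrightarrow> i < n \<Longrightarrow> x i \<noteq> 1 \<Longrightarrow> x(i := 1) \<in> A"
    and "y \<in> A" "E \<subseteq> {0..<n}"
  shows "(\<lambda>i. if i \<in> E then 1 else y i) \<in> A"
  using finite_subset[OF assms(3) finite_atLeastLessThan] assms(3)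
proof (induction E rule: finite_induct)
  case empty
  then show ?case using \<open>y \<in> A\<close> by simp
next
  case (insert e E)
  let ?z = "\<lambda>i. if i \<in> E then 1 else y i"
  have "?z \<in> A" and "e < n" using insert by auto
  moreover have "(\<lambda>i. if i \<in> insert e E then 1 else y i) = ?z(e := 1)" by auto
  ultimately show ?case using stable[of ?z e] by (cases "?z e = 1") (auto simp: fun_upd_idem)
qed

lemma common_ones_if_stable:
  assumes stable: "\<And>x i. x \<in> A \<Longrightarrow> i < n \<Longrightarrow> x i \<noteq> 1 \<Longrightarrow> x(i := 1) \<in> A"
    and agreeing: "\<forall>x\<in>A. \<forall>y\<in>A. d \<le> agree n x y"
    and "x \<in> A" "y \<in> A"
  shows "d \<le> common_ones n x y"
proof -
  define E where "E = {i\<in>{0..<n}. x i = y i}"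
  let ?y = "\<lambda>i. if i \<in> E then 1 else y i"
  have "?y \<in> A" by (rule fill_ones_in_stable[where n = n, OF stable \<open>y \<in> A\<close>]) (auto simp: E_def)
  then have "d \<le> agree n x ?y" using agreeing \<open>x \<in> A\<close> by blast
  moreover have "agree n x ?y = common_ones n x y"
    unfolding agree_def common_ones_def by (rule card_filter_cong) (auto simp: E_def)
  ultimately show ?thesis by simp
qed

lemma obtain_swap_stable:
  assumes "A \<subseteq> words q (Suc n)" "\<forall>x\<in>A. \<forall>y\<in>A. d \<le> common_ones (Suc n) x y"
  obtains B where "B \<subseteq> words q (Suc n)" "card B = card A"
    "\<forall>x\<in>B. \<forall>y\<in>B. d \<le> common_ones (Suc n) x y"
    "\<And>j x. j < n \<Longrightarrow> x \<in> B \<Longrightarrow> x j = 1 \<Longrightarrow> x n \<noteq> 1 \<Longrightarrow> swap_letters j n x \<in> B"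
proof -
  have inj: "inj_on (swap_letters j n) {x. x j = 1 \<and> x n \<noteq> 1}" if "j \<in> {0..<n}" for j
    using inj_swap_letters by (rule inj_on_subset) simp
  have closed: "swap_letters j n x \<in> words q (Suc n)"
    if "j \<in> {0..<n}" "x \<in> words q (Suc n)" "x j = 1 \<and> x n \<noteq> 1" for j x
    using that by (simp add: swap_letters_in_words)
  have increasing: "(if x n = 1 then 1 else 0) < (if swap_letters j n x n = 1 then 1 else 0 :: nat)"
    if "j \<in> {0..<n}" "x j = 1 \<and> x n \<noteq> 1" for j x
    using that by (simp add: swap_letters_def)
  have preserved: "\<forall>x\<in>compress (\<lambda>x. x j = 1 \<and> x n \<noteq> 1) (swap_letters j n) B ` B.
      \<forall>y\<in>compress (\<lambda>x. x j = 1 \<and> x n \<noteq> 1) (swap_letters j n) B ` B. d \<le> common_ones (Suc n) x y"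
    if "j \<in> {0..<n}" "\<forall>x\<in>B. \<forall>y\<in>B. d \<le> common_ones (Suc n) x y" for j B
    using that by (intro common_ones_compress_swap) auto
  obtain B where B: "B \<subseteq> words q (Suc n)" "card B = card A"
    "\<forall>x\<in>B. \<forall>y\<in>B. d \<le> common_ones (Suc n) x y"
    and stable: "\<And>j x. j \<in> {0..<n} \<Longrightarrow> x \<in> B \<Longrightarrow> x j = 1 \<and> x n \<noteq> 1 \<Longrightarrow> swap_letters j n x \<in> B"
    using obtain_compression_stable[of "words q (Suc n)" A
        "\<lambda>B. \<forall>x\<in>B. \<forall>y\<in>B. d \<le> common_ones (Suc n) x y" "{0..<n}" "\<lambda>j. swap_letters j n"
        "\<lambda>j x. x j = 1 \<and> x n \<noteq> 1" "\<lambda>x. if x n = 1 then 1 else 0",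
        OF finite_words assms inj closed increasing preserved]
    by blast
  show ?thesis
  proof (rule that[OF B])
    show "swap_letters j n x \<in> B" if "j < n" "x \<in> B" "x j = 1" "x n \<noteq> 1" for j x
      using stable that by simp
  qed
qed

lemma common_ones_slice_increase:
  assumes stable: "\<And>j x. j < n \<Longrightarrow> x \<in> B \<Longrightarrow> x j = 1 \<Longrightarrow> x n \<noteq> 1 \<Longrightarrow> swap_letters j n x \<in> B"
    and common: "\<forall>x\<in>B. \<forall>y\<in>B. d \<le> common_ones (Suc n) x y" and "0 < d"
    and "x \<in> B" "y \<in> B" "x n = a" "y n = a" "a \<noteq> 1"
  shows "d + 1 \<le> common_ones n x y"
proof (rule ccontr)
  assume "\<not> d + 1 \<le> common_ones n x y"
  moreover have "common_ones (Suc n) x y = common_ones n x y" using assms by (simp add: common_ones_Suc)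
  moreover have "d \<le> common_ones (Suc n) x y" using common assms by blast
  ultimately have d: "common_ones n x y = d" "common_ones (Suc n) x y = d" by simp_all
  then have "{i\<in>{0..<n}. x i = 1 \<and> y i = 1} \<noteq> {}"
    using \<open>0 < d\<close> unfolding common_ones_def by (metis card.empty less_irrefl)
  then obtain j where j: "j < n" "x j = 1" "y j = 1" by auto
  then have "d \<le> common_ones (Suc n) (swap_letters j n x) y" using stable common assms by simp
  moreover have "common_ones (Suc n) (swap_letters j n x) y + 1 = common_ones (Suc n) x y"
    using common_ones_swap_letters_left[of j n x y] j assms by simp
  ultimately show False using d by simp
qed

lemma sum_slices_bound:
  fixes s :: "nat \<Rightarrow> nat"
  assumes "2 \<le> q" "0 < d"
    and one: "s 1 * (q - 1) ^ (d - 1) \<le> N"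
    and other: "\<And>a. a \<in> {2..q} \<Longrightarrow> s a * (q - 1) ^ (d + 1) \<le> N"
  shows "(\<Sum>a\<in>{1..q}. s a) * (q - 1) ^ d \<le> q * N"
proof -
  have "(q - 1) ^ d = (q - 1) * (q - 1) ^ (d - 1)" using \<open>0 < d\<close> by (cases d) auto
  then have s1: "s 1 * (q - 1) ^ d \<le> (q - 1) * N" using one by (simp add: mult.left_commute)
  have "(q - 1) * ((\<Sum>a\<in>{2..q}. s a) * (q - 1) ^ d) = (\<Sum>a\<in>{2..q}. s a) * (q - 1) ^ (d + 1)"
    by (simp add: mult_ac)
  also have "\<dots> = (\<Sum>a\<in>{2..q}. s a * (q - 1) ^ (d + 1))"
    by (rule sum_distrib_right)
  also have "\<dots> \<le> (q - 1) * N" using sum_mono[of "{2..q}" _ "\<lambda>_. N", OF other] by simp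
  finally have "(\<Sum>a\<in>{2..q}. s a) * (q - 1) ^ d \<le> N" using \<open>2 \<le> q\<close> by simp
  moreover have "{1..q} = insert 1 {2..q}" using \<open>2 \<le> q\<close> by auto
  ultimately have "(\<Sum>a\<in>{1..q}. s a) * (q - 1) ^ d \<le> (q - 1) * N + N"
    using s1 by (simp add: add_mult_distrib)
  also have "\<dots> = q * N" using \<open>2 \<le> q\<close> by (simp add: algebra_simps)
  finally show ?thesis .
qed

lemma card_bound_common_ones:
  assumes "2 \<le> q" "A \<subseteq> words q n" "\<forall>x\<in>A. \<forall>y\<in>A. d \<le> common_ones n x y"
  shows "card A * (q - 1) ^ d \<le> q ^ n"
  using assms(2,3)
proof (induction n arbitrary: A d)
  case 0
  then have "d = 0 \<or> A = {}" by (auto simp: common_ones_def)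
  then show ?case using card_mono[OF finite_words "0.prems"(1)] by (auto simp: card_words)
next
  case (Suc n)
  show ?case
  proof (cases "d = 0")
    case True
    then show ?thesis using card_mono[OF finite_words Suc.prems(1)] by (simp add: card_words)
  next
    case False
    then have "0 < d" by simp
    obtain B where B: "B \<subseteq> words q (Suc n)" "card B = card A"
      and common: "\<forall>x\<in>B. \<forall>y\<in>B. d \<le> common_ones (Suc n) x y"
      and stable: "\<And>j x. j < n \<Longrightarrow> x \<in> B \<Longrightarrow> x j = 1 \<Longrightarrow> x n \<noteq> 1 \<Longrightarrow> swap_letters j n x \<in> B"
      using obtain_swap_stable[OF Suc.prems] by blast
    define slice where "slice a = {x\<in>B. x n = a}" for a
    have slice_bound: "card (slice a) * (q - 1) ^ e \<le> q ^ n"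
      if "\<forall>x\<in>slice a. \<forall>y\<in>slice a. e \<le> common_ones n x y" for a e
    proof -
      have "card ((\<lambda>x. restrict x {0..<n}) ` slice a) * (q - 1) ^ e \<le> q ^ n"
        using that B(1) by (intro Suc.IH) (auto simp: slice_def common_ones_restrict intro: restrict_in_words)
      then show ?thesis using card_restrict_slice[OF B(1)] by (simp add: slice_def)
    qed
    have ones_slice: "card (slice 1) * (q - 1) ^ (d - 1) \<le> q ^ n"
      using common by (intro slice_bound) (fastforce simp: slice_def common_ones_Suc)
    have other_slices: "card (slice a) * (q - 1) ^ (d + 1) \<le> q ^ n" if "a \<in> {2..q}" for a
    proof (intro slice_bound ballI)
      fix x y assume "x \<in> slice a" "y \<in> slice a"
      then have "x \<in> B" "y \<in> B" "x n = a" "y n = a" by (auto simp: slice_def)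
      moreover have "a \<noteq> 1" using that by auto
      ultimately show "d + 1 \<le> common_ones n x y"
        using common_ones_slice_increase[OF stable common \<open>0 < d\<close>] by blast
    qed
    have "(\<Sum>a\<in>{1..q}. card (slice a)) * (q - 1) ^ d \<le> q * q ^ n"
      using \<open>0 < d\<close> ones_slice other_slices by (rule sum_slices_bound[OF assms(1)])
    then show ?thesis using card_eq_sum_card_slices[OF B(1)] B(2) by (simp add: slice_def)
  qed
qed

lemma card_bound_agree:
  assumes "2 \<le> q" "A \<subseteq> words q n" "\<forall>x\<in>A. \<forall>y\<in>A. d \<le> agree n x y"
  shows "card A * (q - 1) ^ d \<le> q ^ n"
proof -
  have "1 \<le> q" using assms(1) by simp
  then obtain B where B: "B \<subseteq> words q n" "card B = card A" "\<forall>x\<in>B. \<forall>y\<in>B. d \<le> agree n x y"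
    and stable: "\<And>x i. x \<in> B \<Longrightarrow> i < n \<Longrightarrow> x i \<noteq> 1 \<Longrightarrow> x(i := 1) \<in> B"
    using obtain_one_stable[OF _ assms(2,3)] by blast
  have "\<forall>x\<in>B. \<forall>y\<in>B. d \<le> common_ones n x y"
    using common_ones_if_stable[OF stable B(3)] by blast
  then show ?thesis using card_bound_common_ones[OF assms(1) B(1)] B(2) by simp
qed

lemma powr_tenth_less_power_pred:
  fixes q :: real
  assumes "3 \<le> q" "0 < d"
  shows "q powr (real d / 10) < (q - 1) ^ d"
proof -
  have "q powr (real d / 10) \<le> q powr (real d * (1 / 2))" using assms by (intro powr_mono) auto
  also have "\<dots> = (q powr (1 / 2)) ^ d" using assms by (simp add: powr_power)
  also have "\<dots> = sqrt q ^ d" using assms by (simp add: powr_half_sqrt)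
  also have "\<dots> < (q - 1) ^ d"
  proof (intro power_strict_mono real_less_lsqrt)
    have "0 \<le> q * (q - 3)" using assms by simp
    then show "q < (q - 1)\<^sup>2" by (simp add: power2_eq_square algebra_simps)
  qed (use assms in auto)
  finally show ?thesis .
qed

theorem theorem1p3:
  fixes q n d :: nat and A :: "(nat \<Rightarrow> nat) set"
  assumes "q \<ge> 3" and "1 \<le> d" and "3 * d \<le> n"
    and "A \<subseteq> words q n"
    and "\<And>x y. x \<in> A \<Longrightarrow> y \<in> A \<Longrightarrow> agree n x y \<ge> d"
  shows "real (card A) < real q powr (real n - real d / 10)"
proof -
  have "card A * (q - 1) ^ d \<le> q ^ n" using assms(1,4,5) by (intro card_bound_agree) auto
  then have "real (card A * (q - 1) ^ d) \<le> real (q ^ n)" by (simp only: of_nat_le_iff)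
  then have "real (card A) * (real q - 1) ^ d \<le> real q ^ n" using assms(1) by (simp add: of_nat_diff)
  then have "real (card A) \<le> real q ^ n / (real q - 1) ^ d"
    using assms(1) by (simp add: pos_le_divide_eq)
  also have "\<dots> < real q ^ n / real q powr (real d / 10)"
    using powr_tenth_less_power_pred[of "real q" d] assms(1,2)
    by (intro divide_strict_left_mono) auto
  also have "\<dots> = real q powr (real n - real d / 10)"
    using assms(1) by (simp add: powr_diff powr_realpow)
  finally show ?thesis .
qed

end
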